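(* Let $N\ge2$, $1\le r\le N-1$, $m\ge2$, $\alpha=\begin{pmatrix}\alpha_{11}&\alpha_{12}\\\alpha_{21}&\alpha_{22}\end{pmatrix}\in\mathbb{C}^{N\times N}$. Let $$\beta_{m-1}=\sum_{i\ge0}\begin{pmatrix}A_{m-1,i}&B_{m-1,i}\\C_{m-1,i}&D_{m-1,i}\end{pmatrix}\epsilon^i,\qquad \beta_m=\begin{pmatrix}0&0\\C_{m,0}&D_{m,0}\end{pmatrix}+\sum_{i\ge1}\begin{pmatrix}A_{m,i}&B_{m,i}\\C_{m,i}&D_{m,i}\end{pmatrix}\epsilon^i$$ with $\det\beta_m=O(\epsilon^r)$ and $\det D_{m,0}\neq0$, and let $\beta_{m+1}=m\beta_m^{-1}-\beta_{m-1}-\beta_m-\alpha$. Put $S:=A_{m,1}-B_{m,1}D_{m,0}^{-1}C_{m,0}\in\mathbb{C}^{r\times r}$ (which is invertible). Then, as $\epsilon\to0$, $$\det\beta_{m+1}=\epsilon^{-r}\det\begin{pmatrix}mS^{-1}&-mS^{-1}B_{m,1}D_{m,0}^{-1}-B_{m-1,0}-\alpha_{12}\\-mD_{m,0}^{-1}C_{m,0}S^{-1}&mD_{m,0}^{-1}+mD_{m,0}^{-1}C_{m,0}S^{-1}B_{m,1}D_{m,0}^{-1}-D_{m-1,0}-D_{m,0}-\alpha_{22}\end{pmatrix}+O(\epsilon^{-r+1}).$$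
   Context: Blocks: upper-left $r\times r$, upper-right $r\times(N-r)$, lower-left $(N-r)\times r$, lower-right $(N-r)\times(N-r)$. Expansions are asymptotic expansions in $\epsilon\to0$, inverses computed in the ring of Laurent expansions; $\det\beta_m=O(\epsilon^r)$ means $\det\beta_m=c\epsilon^r+O(\epsilon^{r+1})$ with $c\ne0$. *)

theory Defs
  imports "HOL-Computational_Algebra.Formal_Laurent_Series" "Jordan_Normal_Form.Determinant"
begin

(* i-th coefficient matrix of a matrix of formal power series in epsilon *)
definition coeff_mat :: "'a::zero fps mat \<Rightarrow> nat \<Rightarrow> 'a mat" where
  "coeff_mat M i = map_mat (\<lambda>f. f $ i) M"

definition to_fls_mat :: "'a::zero fps mat \<Rightarrow> 'a fls mat" where
  "to_fls_mat M = map_mat fps_to_fls M"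

definition const_fls_mat :: "'a::zero mat \<Rightarrow> 'a fls mat" where
  "const_fls_mat M = map_mat fls_const M"

definition mat_inv :: "'a::field mat \<Rightarrow> 'a mat" where
  "mat_inv A = inverse (det A) \<cdot>\<^sub>m adj_mat A"

definition bigO_eps :: "'a::zero fls \<Rightarrow> int \<Rightarrow> bool" where
  "bigO_eps f k \<longleftrightarrow> f = 0 \<or> fls_subdegree f \<ge> k"

end

theory Submission
  imports Defs
begin

text \<open>
  The first \<open>r\<close> rows of \<open>\<beta>\<^sub>m\<close> vanish at \<open>\<epsilon> = 0\<close>, so \<open>\<beta>\<^sub>m = E G\<close> with
  \<open>E = diag(\<epsilon> I\<^sub>r, I\<^sub>N\<^sub>-\<^sub>r)\<close> and a power series matrix \<open>G\<close> whose constant term is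
  \<open>G(0) = [A\<^sub>m\<^sub>,\<^sub>1 B\<^sub>m\<^sub>,\<^sub>1; C\<^sub>m\<^sub>,\<^sub>0 D\<^sub>m\<^sub>,\<^sub>0]\<close>. Since \<open>det \<beta>\<^sub>m = \<epsilon>\<^sup>r det G\<close> has order exactly
  \<open>r\<close>, \<open>G(0)\<close> is invertible; the Schur complement formula
  \<open>det G(0) = det S \<cdot> det D\<^sub>m\<^sub>,\<^sub>0\<close> then shows that \<open>S\<close> is invertible and gives \<open>G(0)\<^sup>-\<^sup>1\<close>
  in block form. Multiplying \<open>\<beta>\<^sub>m\<^sub>+\<^sub>1\<close> on the right by \<open>E\<close> clears the pole of
  \<open>\<beta>\<^sub>m\<^sup>-\<^sup>1 = G\<^sup>-\<^sup>1 E\<^sup>-\<^sup>1\<close>: \<open>\<beta>\<^sub>m\<^sub>+\<^sub>1 E = m G\<^sup>-\<^sup>1 - (\<beta>\<^sub>m\<^sub>-\<^sub>1 + \<beta>\<^sub>m + \<alpha>) E\<close> is a power series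
  matrix, and its constant term is the block matrix of the statement. Taking determinants,
  \<open>det \<beta>\<^sub>m\<^sub>+\<^sub>1 = \<epsilon>\<^sup>-\<^sup>r det (\<beta>\<^sub>m\<^sub>+\<^sub>1 E)\<close>.
\<close>

section \<open>Inverses via the adjugate\<close>

lemma mat_inv_carrier: "A \<in> carrier_mat n n \<Longrightarrow> mat_inv A \<in> carrier_mat n n"
  unfolding mat_inv_def by (simp add: adj_mat(1))

lemma mat_inv_right:
  fixes A :: "'a::field mat"
  assumes "A \<in> carrier_mat n n" and "det A \<noteq> 0"
  shows "A * mat_inv A = 1\<^sub>m n"
  using assms unfolding mat_inv_def
  by (intro eq_matI) (auto simp: mult_smult_distrib[OF _ adj_mat(1)] adj_mat(2))

lemma mat_inv_left:
  fixes A :: "'a::field mat"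
  assumes "A \<in> carrier_mat n n" and "det A \<noteq> 0"
  shows "mat_inv A * A = 1\<^sub>m n"
  using assms unfolding mat_inv_def
  by (intro eq_matI) (auto simp: mult_smult_assoc_mat[OF adj_mat(1)] adj_mat(3))

lemma mat_inv_eqI:
  fixes A :: "'a::field mat"
  assumes "A \<in> carrier_mat n n" and "det A \<noteq> 0" and "X \<in> carrier_mat n n" and "A * X = 1\<^sub>m n"
  shows "mat_inv A = X"
proof -
  have "X = (mat_inv A * A) * X" using mat_inv_left[OF assms(1,2)] assms(3) by simp
  also have "\<dots> = mat_inv A * (A * X)"
    using assms mat_inv_carrier by (intro assoc_mult_mat) auto
  also have "\<dots> = mat_inv A" using assms(1,4) mat_inv_carrier[OF assms(1)] by simp
  finally show ?thesis ..
qed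

lemma mat_inv_mult:
  fixes A B :: "'a::field mat"
  assumes A: "A \<in> carrier_mat n n" and B: "B \<in> carrier_mat n n"
    and "det A \<noteq> 0" and "det B \<noteq> 0"
  shows "mat_inv (A * B) = mat_inv B * mat_inv A"
proof -
  have Ai: "mat_inv A \<in> carrier_mat n n" and Bi: "mat_inv B \<in> carrier_mat n n"
    using A B by (simp_all add: mat_inv_carrier)
  have "A * B * (mat_inv B * mat_inv A) = A * ((B * mat_inv B) * mat_inv A)"
    using A B Ai Bi by (simp add: assoc_mult_mat[of _ n n _ n _ n])
  then have "A * B * (mat_inv B * mat_inv A) = 1\<^sub>m n"
    using assms Ai by (simp add: mat_inv_right)
  moreover have "det (A * B) \<noteq> 0" using assms by (simp add: det_mult[OF A B])
  ultimately show ?thesis using A B Ai Bi by (intro mat_inv_eqI) auto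
qed

lemma mat_inv_mult_left_factor:
  fixes E G Gi :: "'a::field mat"
  assumes E: "E \<in> carrier_mat n n" and G: "G \<in> carrier_mat n n" and Gi: "Gi \<in> carrier_mat n n"
    and "det (E * G) \<noteq> 0" and "G * Gi = 1\<^sub>m n"
  shows "mat_inv (E * G) * E = Gi"
proof -
  have EGi: "mat_inv (E * G) \<in> carrier_mat n n" using E G by (simp add: mat_inv_carrier)
  have "mat_inv (E * G) * E = mat_inv (E * G) * E * (G * Gi)"
    using assms EGi by simp
  also have "\<dots> = (mat_inv (E * G) * (E * G)) * Gi"
    using E G Gi EGi by (simp add: assoc_mult_mat[of _ n n _ n _ n])
  also have "\<dots> = Gi"
    using mat_inv_left[OF mult_carrier_mat[OF E G] \<open>det (E * G) \<noteq> 0\<close>] Gi by simp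
  finally show ?thesis .
qed

section \<open>Schur complements\<close>

lemma uminus_zero_mat [simp]: "- 0\<^sub>m nr nc = (0\<^sub>m nr nc :: 'a::group_add mat)"
  by (intro eq_matI) auto

lemma split_block_square:
  assumes "split_block M r r = (A, B, C, D)" and "M \<in> carrier_mat (r + n) (r + n)"
  shows "A \<in> carrier_mat r r" "B \<in> carrier_mat r n" "C \<in> carrier_mat n r" "D \<in> carrier_mat n n"
    "M = four_block_mat A B C D"
  using split_block[OF assms(1), of n n] assms(2) by auto

lemma four_block_mat_schur_factor:
  fixes A B C D :: "'a::field mat"
  assumes A: "A \<in> carrier_mat r r" and B: "B \<in> carrier_mat r n"
    and C: "C \<in> carrier_mat n r" and D: "D \<in> carrier_mat n n" and "det D \<noteq> 0"
  shows "four_block_mat A B C D = four_block_mat (1\<^sub>m r) (B * mat_inv D) (0\<^sub>m n r) (1\<^sub>m n)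
    * four_block_mat (A - B * mat_inv D * C) (0\<^sub>m r n) C D"
proof -
  have Di: "mat_inv D \<in> carrier_mat n n" using D by (rule mat_inv_carrier)
  have "B * mat_inv D * D = B"
    using B D Di mat_inv_left[OF D \<open>det D \<noteq> 0\<close>] by (simp add: assoc_mult_mat[of _ r n])
  moreover have "A - B * mat_inv D * C + B * mat_inv D * C = A"
    using A B C Di by (intro eq_matI) auto
  ultimately show ?thesis
    using A B C D Di by (subst mult_four_block_mat[of _ r r _ n _ n _ _ r _ n]) auto
qed

lemma det_four_block_mat_schur:
  fixes A B C D :: "'a::field mat"
  assumes A: "A \<in> carrier_mat r r" and B: "B \<in> carrier_mat r n"
    and C: "C \<in> carrier_mat n r" and D: "D \<in> carrier_mat n n" and "det D \<noteq> 0"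
  shows "det (four_block_mat A B C D) = det (A - B * mat_inv D * C) * det D"
proof -
  have Di: "mat_inv D \<in> carrier_mat n n" using D by (rule mat_inv_carrier)
  have "det (four_block_mat (1\<^sub>m r) (B * mat_inv D) (0\<^sub>m n r) (1\<^sub>m n)) = 1"
    using B Di by (subst det_four_block_mat_lower_left_zero[of _ r _ n]) auto
  moreover have "det (four_block_mat (A - B * mat_inv D * C) (0\<^sub>m r n) C D)
      = det (A - B * mat_inv D * C) * det D"
    using A B C D Di by (subst det_four_block_mat_upper_right_zero[of _ r _ n]) auto
  ultimately show ?thesis
    using A B C D Di
    by (subst four_block_mat_schur_factor[OF assms], subst det_mult[where n = "r + n"]) auto
qed

lemma mat_inv_four_block_mat_unit_upper:
  fixes X :: "'a::field mat"
  assumes "X \<in> carrier_mat r n"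
  shows "mat_inv (four_block_mat (1\<^sub>m r) X (0\<^sub>m n r) (1\<^sub>m n))
    = four_block_mat (1\<^sub>m r) (- X) (0\<^sub>m n r) (1\<^sub>m n)"
proof (rule mat_inv_eqI)
  show "det (four_block_mat (1\<^sub>m r) X (0\<^sub>m n r) (1\<^sub>m n)) \<noteq> 0"
    using assms by (subst det_four_block_mat_lower_left_zero[of _ r _ n]) auto
  show "four_block_mat (1\<^sub>m r) X (0\<^sub>m n r) (1\<^sub>m n)
      * four_block_mat (1\<^sub>m r) (- X) (0\<^sub>m n r) (1\<^sub>m n) = 1\<^sub>m (r + n)"
    using assms by (subst mult_four_block_mat[of _ r r _ n _ n _ _ r _ n]) auto
qed (use assms in auto)

lemma mat_inv_four_block_mat_lower:
  fixes S C D :: "'a::field mat"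
  assumes S: "S \<in> carrier_mat r r" and C: "C \<in> carrier_mat n r" and D: "D \<in> carrier_mat n n"
    and detS: "det S \<noteq> 0" and detD: "det D \<noteq> 0"
  shows "mat_inv (four_block_mat S (0\<^sub>m r n) C D)
    = four_block_mat (mat_inv S) (0\<^sub>m r n) (- (mat_inv D * C * mat_inv S)) (mat_inv D)"
proof -
  have Si: "mat_inv S \<in> carrier_mat r r" and Di: "mat_inv D \<in> carrier_mat n n"
    using S D by (simp_all add: mat_inv_carrier)
  have "D * (mat_inv D * C * mat_inv S) = (D * mat_inv D) * (C * mat_inv S)"
    using C D Si Di by (simp add: assoc_mult_mat[of _ n n _ n _ r] assoc_mult_mat[of _ n n _ r _ r])
  also have "\<dots> = C * mat_inv S" using C Si D detD by (simp add: mat_inv_right)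
  finally have "D * - (mat_inv D * C * mat_inv S) = - (C * mat_inv S)"
    using C Si D Di by (subst uminus_mult_right_mat) auto
  then have "C * mat_inv S + D * - (mat_inv D * C * mat_inv S) = 0\<^sub>m n r"
    using C Si by (intro eq_matI) auto
  then have "four_block_mat S (0\<^sub>m r n) C D
      * four_block_mat (mat_inv S) (0\<^sub>m r n) (- (mat_inv D * C * mat_inv S)) (mat_inv D)
    = 1\<^sub>m (r + n)"
    using S C D Si Di detS detD
    by (subst mult_four_block_mat[of _ r r _ n _ n _ _ r _ n]) (auto simp: mat_inv_right)
  moreover have "det (four_block_mat S (0\<^sub>m r n) C D) \<noteq> 0"
    using S C D detS detD by (subst det_four_block_mat_upper_right_zero[of _ r _ n]) auto
  ultimately show ?thesis using S C D Si Di by (intro mat_inv_eqI) auto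
qed

lemma mat_inv_four_block_mat_schur:
  fixes A B C D :: "'a::field mat"
  assumes A: "A \<in> carrier_mat r r" and B: "B \<in> carrier_mat r n"
    and C: "C \<in> carrier_mat n r" and D: "D \<in> carrier_mat n n"
    and detD: "det D \<noteq> 0" and detS: "det (A - B * mat_inv D * C) \<noteq> 0"
  defines "Di \<equiv> mat_inv D" and "Si \<equiv> mat_inv (A - B * mat_inv D * C)"
  shows "mat_inv (four_block_mat A B C D)
    = four_block_mat Si (- (Si * B * Di)) (- (Di * C * Si)) (Di + Di * C * Si * B * Di)"
proof -
  define S where "S = A - B * Di * C"
  have Di: "Di \<in> carrier_mat n n" unfolding Di_def using D by (rule mat_inv_carrier)
  have S: "S \<in> carrier_mat r r" unfolding S_def using A B C Di by (simp add: minus_carrier_mat)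
  have Si: "Si = mat_inv S" "Si \<in> carrier_mat r r"
    unfolding Si_def S_def Di_def using S[unfolded S_def Di_def] by (simp_all add: mat_inv_carrier)
  have detS': "det S \<noteq> 0" using detS unfolding S_def Di_def .
  define U where "U = four_block_mat (1\<^sub>m r) (B * Di) (0\<^sub>m n r) (1\<^sub>m n)"
  define L where "L = four_block_mat S (0\<^sub>m r n) C D"
  have U: "U \<in> carrier_mat (r + n) (r + n)" and L: "L \<in> carrier_mat (r + n) (r + n)"
    unfolding U_def L_def using B C D Di S by auto
  have "det U \<noteq> 0"
    unfolding U_def using B Di by (subst det_four_block_mat_lower_left_zero[of _ r _ n]) auto
  moreover have "det L \<noteq> 0"
    unfolding L_def using S C D detS' detD
    by (subst det_four_block_mat_upper_right_zero[of _ r _ n]) auto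
  moreover have "four_block_mat A B C D = U * L"
    unfolding U_def L_def S_def Di_def by (rule four_block_mat_schur_factor[OF A B C D detD])
  ultimately have "mat_inv (four_block_mat A B C D) = mat_inv L * mat_inv U"
    using U L by (simp add: mat_inv_mult)
  also have "\<dots> = four_block_mat Si (0\<^sub>m r n) (- (Di * C * Si)) Di
      * four_block_mat (1\<^sub>m r) (- (B * Di)) (0\<^sub>m n r) (1\<^sub>m n)"
    unfolding U_def L_def Si(1) Di_def
    using B C D S detS' detD Di[unfolded Di_def]
    by (simp add: mat_inv_four_block_mat_lower mat_inv_four_block_mat_unit_upper)
  also have "\<dots> = four_block_mat Si (- (Si * (B * Di))) (- (Di * C * Si)) (Di * C * Si * (B * Di) + Di)"
    using B C Di Si by (subst mult_four_block_mat[of _ r r _ n _ n _ _ r _ n]) auto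
  also have "\<dots> = four_block_mat Si (- (Si * B * Di)) (- (Di * C * Si)) (Di + Di * C * Si * B * Di)"
  proof -
    have "Di * C * Si \<in> carrier_mat n r" using C Di Si by simp
    then have "Di * C * Si * (B * Di) + Di = Di + Di * C * Si * B * Di"
      using B Di by (simp add: assoc_mult_mat[of _ n r _ n _ n] comm_add_mat[of _ n n])
    with assoc_mult_mat[OF Si(2) B Di] show ?thesis by simp
  qed
  finally show ?thesis .
qed

section \<open>Matrices of formal power series\<close>

interpretation fps_constant_term: comm_ring_hom "\<lambda>f::'a::comm_ring_1 fps. f $ 0"
  by unfold_locales auto

interpretation fps_to_fls: comm_ring_hom "fps_to_fls :: 'a::comm_ring_1 fps \<Rightarrow> 'a fls"
  by unfold_locales (auto simp: fls_times_fps_to_fls)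

lemma coeff_mat_carrier: "M \<in> carrier_mat nr nc \<Longrightarrow> coeff_mat M k \<in> carrier_mat nr nc"
  unfolding coeff_mat_def by simp

lemma coeff_mat_0_mult:
  fixes A B :: "'a::comm_ring_1 fps mat"
  shows "A \<in> carrier_mat nr n \<Longrightarrow> B \<in> carrier_mat n nc
    \<Longrightarrow> coeff_mat (A * B) 0 = coeff_mat A 0 * coeff_mat B 0"
  unfolding coeff_mat_def by (rule fps_constant_term.mat_hom_mult)

lemma det_coeff_mat_0: "det (coeff_mat M 0) = det M $ 0"
  unfolding coeff_mat_def by (rule fps_constant_term.hom_det)

lemma to_fls_mat_mult:
  fixes A B :: "'a::comm_ring_1 fps mat"
  shows "A \<in> carrier_mat nr n \<Longrightarrow> B \<in> carrier_mat n nc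
    \<Longrightarrow> to_fls_mat (A * B) = to_fls_mat A * to_fls_mat B"
  unfolding to_fls_mat_def by (rule fps_to_fls.mat_hom_mult)

lemma to_fls_mat_carrier: "M \<in> carrier_mat nr nc \<Longrightarrow> to_fls_mat M \<in> carrier_mat nr nc"
  unfolding to_fls_mat_def by simp

lemma to_fls_mat_one [simp]: "to_fls_mat (1\<^sub>m n :: 'a::comm_ring_1 fps mat) = 1\<^sub>m n"
  unfolding to_fls_mat_def by (rule fps_to_fls.mat_hom_one)

lemma det_to_fls_mat: "det (to_fls_mat M) = fps_to_fls (det M)"
  unfolding to_fls_mat_def by (rule fps_to_fls.hom_det)

lemma fps_mat_right_inverse:
  fixes G :: "'a::field fps mat"
  assumes G: "G \<in> carrier_mat n n" and det0: "det G $ 0 \<noteq> 0"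
  obtains Gi where "Gi \<in> carrier_mat n n" and "G * Gi = 1\<^sub>m n"
    and "coeff_mat Gi 0 = mat_inv (coeff_mat G 0)"
proof
  define Gi where "Gi = inverse (det G) \<cdot>\<^sub>m adj_mat G"
  show Gi: "Gi \<in> carrier_mat n n" unfolding Gi_def using adj_mat(1)[OF G] by simp
  \<comment> \<open>\<open>inverse (det G)\<close> is a genuine inverse because \<open>det G $ 0 \<noteq> 0\<close>\<close>
  show GGi: "G * Gi = 1\<^sub>m n"
    unfolding Gi_def using G det0
    by (intro eq_matI) (auto simp: mult_smult_distrib[OF G adj_mat(1)[OF G]] adj_mat(2)[OF G])
  have "coeff_mat G 0 * coeff_mat Gi 0 = 1\<^sub>m n"
    using GGi fps_constant_term.mat_hom_one
    unfolding coeff_mat_0_mult[OF G Gi, symmetric] by (simp add: coeff_mat_def)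
  then show "coeff_mat Gi 0 = mat_inv (coeff_mat G 0)"
    using G Gi det0 coeff_mat_carrier
    by (intro mat_inv_eqI[symmetric]) (auto simp: det_coeff_mat_0)
qed

lemma det_mat_diag: "det (mat_diag n f) = (\<Prod>i<n. f i :: 'a::comm_ring_1)"
  by (subst det_upper_triangular[of _ n])
    (auto simp: mat_diag_def prod_list_diag_prod atLeast0LessThan)

definition diag_X_rows :: "nat \<Rightarrow> nat \<Rightarrow> 'a::comm_ring_1 fps mat" where
  "diag_X_rows r n = mat_diag n (\<lambda>i. if i < r then fps_X else 1)"

definition fps_shift_rows :: "nat \<Rightarrow> 'a::comm_ring_1 fps mat \<Rightarrow> 'a fps mat" where
  "fps_shift_rows r M = mat (dim_row M) (dim_col M)
     (\<lambda>(i, j). if i < r then fps_shift 1 (M $$ (i, j)) else M $$ (i, j))"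

lemma fps_shift_rows_carrier [simp]:
  "M \<in> carrier_mat nr nc \<Longrightarrow> fps_shift_rows r M \<in> carrier_mat nr nc"
  unfolding fps_shift_rows_def by simp

lemma det_diag_X_rows: "r \<le> n \<Longrightarrow> det (diag_X_rows r n) = fps_X ^ r"
proof -
  assume "r \<le> n"
  then have "{..<n} \<inter> {i. i < r} = {..<r}" by auto
  then show ?thesis
    unfolding diag_X_rows_def det_mat_diag by (simp add: prod.If_cases)
qed

lemma coeff_mat_diag_X_rows_0:
  "coeff_mat (diag_X_rows r n) 0 = mat_diag n (\<lambda>i. if i < r then 0 else 1)"
  unfolding coeff_mat_def diag_X_rows_def mat_diag_def by (intro eq_matI) auto

lemma coeff_mat_fps_shift_rows_0:
  "coeff_mat (fps_shift_rows r M) 0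
    = mat (dim_row M) (dim_col M) (\<lambda>(i, j). if i < r then M $$ (i, j) $ 1 else M $$ (i, j) $ 0)"
  unfolding coeff_mat_def fps_shift_rows_def by (intro eq_matI) auto

lemma diag_X_rows_mult_fps_shift_rows:
  fixes M :: "'a::comm_ring_1 fps mat"
  assumes M: "M \<in> carrier_mat n n" and "\<And>i j. i < r \<Longrightarrow> j < n \<Longrightarrow> M $$ (i, j) $ 0 = 0"
  shows "diag_X_rows r n * fps_shift_rows r M = M"
proof -
  have "fps_X * fps_shift 1 f = f" if "f $ 0 = 0" for f :: "'a fps"
    using that by (intro fps_ext) (auto simp: fps_X_mult_nth)
  with assms show ?thesis
    unfolding diag_X_rows_def by (subst mat_diag_mult_left[of _ n n]) (auto simp: fps_shift_rows_def)
qed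

lemma det_fps_shift_rows_nth_0:
  fixes M :: "'a::field fps mat"
  assumes M: "M \<in> carrier_mat n n" and "r \<le> n"
    and rows: "\<And>i j. i < r \<Longrightarrow> j < n \<Longrightarrow> M $$ (i, j) $ 0 = 0"
    and "det M \<noteq> 0" and "subdegree (det M) = r"
  shows "det (fps_shift_rows r M) $ 0 \<noteq> 0"
proof -
  have "diag_X_rows r n \<in> carrier_mat n n" unfolding diag_X_rows_def by simp
  then have "det M = fps_X ^ r * det (fps_shift_rows r M)"
    using det_mult[of "diag_X_rows r n" n "fps_shift_rows r M"] M
    by (simp add: diag_X_rows_mult_fps_shift_rows[OF M rows] det_diag_X_rows[OF \<open>r \<le> n\<close>])
  with assms have "subdegree (det (fps_shift_rows r M)) = 0" by auto
  with \<open>det M \<noteq> 0\<close> \<open>det M = _\<close> show ?thesis by (auto simp: subdegree_eq_0_iff)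
qed

lemma fps_mat_factor_leading_rows:
  fixes M :: "'a::field fps mat"
  assumes M: "M \<in> carrier_mat (r + n) (r + n)"
    and split0: "split_block (coeff_mat M 0) r r = (0\<^sub>m r r, 0\<^sub>m r n, C0, D0)"
    and split1: "split_block (coeff_mat M 1) r r = (A1, B1, C1, D1)"
    and "det M \<noteq> 0" and "subdegree (det M) = r"
  obtains G where "G \<in> carrier_mat (r + n) (r + n)" and "M = diag_X_rows r (r + n) * G"
    and "det G $ 0 \<noteq> 0" and "coeff_mat G 0 = four_block_mat A1 B1 C0 D0"
proof
  note blocks0 = split_block_square[OF split0 coeff_mat_carrier[OF M]]
    and blocks1 = split_block_square[OF split1 coeff_mat_carrier[OF M]]
  have M0: "M $$ (i, j) $ 0 = four_block_mat (0\<^sub>m r r) (0\<^sub>m r n) C0 D0 $$ (i, j)"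
    and M1: "M $$ (i, j) $ 1 = four_block_mat A1 B1 C1 D1 $$ (i, j)"
    if "i < r + n" "j < r + n" for i j
    using that M blocks0(5)[symmetric] blocks1(5)[symmetric] by (simp_all add: coeff_mat_def)
  have rows: "M $$ (i, j) $ 0 = 0" if "i < r" "j < r + n" for i j
    using M0[of i j] that blocks0 by simp
  show "fps_shift_rows r M \<in> carrier_mat (r + n) (r + n)" using M by simp
  show "M = diag_X_rows r (r + n) * fps_shift_rows r M"
    using diag_X_rows_mult_fps_shift_rows[OF M rows] by simp
  show "det (fps_shift_rows r M) $ 0 \<noteq> 0"
    using det_fps_shift_rows_nth_0[OF M _ rows] assms(4,5) by simp
  show "coeff_mat (fps_shift_rows r M) 0 = four_block_mat A1 B1 C0 D0"
    unfolding coeff_mat_fps_shift_rows_0 using M blocks0 blocks1 M0 M1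
    by (intro eq_matI) auto
qed

section \<open>Laurent expansion of the determinant\<close>

lemma bigO_eps_leading_term:
  fixes f :: "'a::field fls" and h :: "'a fps"
  assumes "f * fls_X ^ r = fps_to_fls h"
  shows "bigO_eps (f - fls_X_intpow (- int r) * fls_const (h $ 0)) (- int r + 1)"
proof -
  define g where "g = h - fps_const (h $ 0)"
  have "fls_X_intpow (- int r) * fls_X_intpow (int r) = (1 :: 'a fls)"
    using fls_X_intpow_times_fls_X_intpow[of "- int r" "int r"] by simp
  then have "f = fls_X_intpow (- int r) * (f * fls_X_intpow (int r))"
    by (metis mult.commute mult.left_commute mult_1_right)
  also have "\<dots> = fls_X_intpow (- int r) * fps_to_fls h"
    using assms by (simp add: fls_X_power_conv_shift_1)
  finally have "f - fls_X_intpow (- int r) * fls_const (h $ 0) = fls_X_intpow (- int r) * fps_to_fls g"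
    unfolding g_def by (simp add: right_diff_distrib)
  moreover have "fls_subdegree (fls_X_intpow (- int r) * fps_to_fls g) \<ge> - int r + 1"
    if "g \<noteq> 0"
  proof -
    have "g $ 0 = 0" unfolding g_def by simp
    with that have "subdegree g \<ge> 1" using subdegree_eq_0_iff[of g] by simp
    with that show ?thesis
      by (subst fls_subdegree_mult) (auto simp: fls_subdegree_fls_to_fps fls_shift_eq0_iff)
  qed
  ultimately show ?thesis unfolding bigO_eps_def by auto
qed

lemma det_resolvent_expansion:
  fixes G P :: "'a::field fps mat" and c :: 'a
  assumes "r \<le> n" and G: "G \<in> carrier_mat n n" and P: "P \<in> carrier_mat n n"
    and G0: "det G $ 0 \<noteq> 0"
  defines "E \<equiv> diag_X_rows r n"
  shows "bigO_eps (det (fls_const c \<cdot>\<^sub>m mat_inv (to_fls_mat (E * G)) - to_fls_mat P)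
      - fls_X_intpow (- int r) * fls_const (det (c \<cdot>\<^sub>m mat_inv (coeff_mat G 0)
          - coeff_mat P 0 * mat_diag n (\<lambda>i. if i < r then 0 else 1))))
    (- int r + 1)"
proof -
  obtain Gi where Gi: "Gi \<in> carrier_mat n n" and GGi: "G * Gi = 1\<^sub>m n"
    and Gi0: "coeff_mat Gi 0 = mat_inv (coeff_mat G 0)"
    using fps_mat_right_inverse[OF G G0] by blast
  have E: "E \<in> carrier_mat n n" unfolding E_def diag_X_rows_def by simp
  note carriers = E G Gi P
    E[THEN to_fls_mat_carrier] G[THEN to_fls_mat_carrier] Gi[THEN to_fls_mat_carrier]
    P[THEN to_fls_mat_carrier]
  have EG: "to_fls_mat (E * G) = to_fls_mat E * to_fls_mat G" by (rule to_fls_mat_mult[OF E G])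
  have detE: "det (to_fls_mat E) = fls_X ^ r"
    unfolding E_def det_to_fls_mat det_diag_X_rows[OF \<open>r \<le> n\<close>] by (simp add: fps_to_fls_power)
  have "det G \<noteq> 0" using G0 by auto
  then have "det (E * G) \<noteq> 0"
    unfolding det_mult[OF E G] unfolding E_def det_diag_X_rows[OF \<open>r \<le> n\<close>] by simp
  moreover have "to_fls_mat G * to_fls_mat Gi = 1\<^sub>m n"
    using GGi to_fls_mat_mult[OF G Gi] by simp
  ultimately have inv_E: "mat_inv (to_fls_mat (E * G)) * to_fls_mat E = to_fls_mat Gi"
    unfolding EG using carriers
    by (intro mat_inv_mult_left_factor) (simp_all add: det_to_fls_mat flip: EG)
  define H where "H = fps_const c \<cdot>\<^sub>m Gi - P * E"
  define R where "R = fls_const c \<cdot>\<^sub>m mat_inv (to_fls_mat (E * G)) - to_fls_mat P"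
  have inv: "mat_inv (to_fls_mat (E * G)) \<in> carrier_mat n n"
    using mat_inv_carrier[OF to_fls_mat_carrier[OF mult_carrier_mat[OF E G]]] .
  have R: "R \<in> carrier_mat n n" unfolding R_def using carriers by (simp add: minus_carrier_mat)
  have "R * to_fls_mat E = fls_const c \<cdot>\<^sub>m to_fls_mat Gi - to_fls_mat P * to_fls_mat E"
    unfolding R_def using carriers inv_E inv
    by (simp add: minus_mult_distrib_mat[of _ n n] mult_smult_assoc_mat[of _ n n])
  also have "\<dots> = to_fls_mat H"
    unfolding H_def to_fls_mat_mult[OF P E, symmetric] using carriers
    by (intro eq_matI) (auto simp: to_fls_mat_def fls_times_fps_to_fls)
  finally have "det R * fls_X ^ r = fps_to_fls (det H)"
    using det_mult[OF R carriers(5)] by (simp add: detE flip: det_to_fls_mat)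
  moreover have "coeff_mat H 0
      = c \<cdot>\<^sub>m mat_inv (coeff_mat G 0) - coeff_mat P 0 * mat_diag n (\<lambda>i. if i < r then 0 else 1)"
    unfolding H_def Gi0[symmetric] E_def[symmetric] coeff_mat_diag_X_rows_0[symmetric]
      coeff_mat_0_mult[OF P E, symmetric] using carriers
    by (intro eq_matI) (auto simp: coeff_mat_def)
  ultimately show ?thesis
    unfolding R_def by (metis bigO_eps_leading_term det_coeff_mat_0)
qed

theorem lemma2:
  fixes N r m :: nat
    and \<alpha> :: "complex mat"
    and \<beta>0 \<beta>1 :: "complex fps mat"  (* \<beta>0 = beta_{m-1}, \<beta>1 = beta_m *)
    and \<alpha>11 \<alpha>12 \<alpha>21 \<alpha>22 :: "complex mat"
    and A00 B00 C00 D00 :: "complex mat"  (* blocks of coefficient 0 of beta_{m-1} *)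
    and A10 B10 C10 D10 :: "complex mat"  (* blocks of coefficient 0 of beta_m *)
    and A11 B11 C11 D11 :: "complex mat"  (* blocks of coefficient 1 of beta_m *)
  assumes "N \<ge> 2" and "1 \<le> r" and "r \<le> N - 1" and "m \<ge> 2"
    and "\<alpha> \<in> carrier_mat N N"
    and "\<beta>0 \<in> carrier_mat N N" and "\<beta>1 \<in> carrier_mat N N"
    and "split_block \<alpha> r r = (\<alpha>11, \<alpha>12, \<alpha>21, \<alpha>22)"
    and "split_block (coeff_mat \<beta>0 0) r r = (A00, B00, C00, D00)"
    and "split_block (coeff_mat \<beta>1 0) r r = (A10, B10, C10, D10)"
    and "split_block (coeff_mat \<beta>1 1) r r = (A11, B11, C11, D11)"
    and "A10 = 0\<^sub>m r r" and "B10 = 0\<^sub>m r (N - r)"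
    and "det (to_fls_mat \<beta>1) \<noteq> 0"
    and "fls_subdegree (det (to_fls_mat \<beta>1)) = int r"
    and "det D10 \<noteq> 0"
  shows "let
      \<beta>2 = of_nat m \<cdot>\<^sub>m mat_inv (to_fls_mat \<beta>1) - to_fls_mat \<beta>0 - to_fls_mat \<beta>1
             - const_fls_mat \<alpha>;
      Di = mat_inv D10;
      S = A11 - B11 * Di * C10;
      Si = mat_inv S;
      M = four_block_mat
            (of_nat m \<cdot>\<^sub>m Si)
            (- (of_nat m \<cdot>\<^sub>m (Si * B11 * Di)) - B00 - \<alpha>12)
            (- (of_nat m \<cdot>\<^sub>m (Di * C10 * Si)))
            (of_nat m \<cdot>\<^sub>m Di + of_nat m \<cdot>\<^sub>m (Di * C10 * Si * B11 * Di) - D00 - D10 - \<alpha>22)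
    in det S \<noteq> 0 \<and>
       bigO_eps (det \<beta>2 - fls_X_intpow (- int r) * fls_const (det M)) (- int r + 1)"
proof -
  define n where "n = N - r"
  have N: "N = r + n" using assms(2,3) unfolding n_def by simp
  note blocks_\<alpha> = split_block_square[OF assms(8) assms(5)[unfolded N]]
    and blocks_00 = split_block_square[OF assms(9) coeff_mat_carrier[OF assms(6)[unfolded N]]]
    and blocks_10 = split_block_square[OF assms(10) coeff_mat_carrier[OF assms(7)[unfolded N]]]
    and blocks_11 = split_block_square[OF assms(11) coeff_mat_carrier[OF assms(7)[unfolded N]]]
  note blocks = blocks_\<alpha>(1-4) blocks_00(1-4) blocks_10(1-4) blocks_11(1-4)
  obtain G where G: "G \<in> carrier_mat N N" and \<beta>1_factor: "\<beta>1 = diag_X_rows r N * G"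
    and detG: "det G $ 0 \<noteq> 0" and G0: "coeff_mat G 0 = four_block_mat A11 B11 C10 D10"
    using fps_mat_factor_leading_rows[OF assms(7)[unfolded N]
        assms(10)[unfolded assms(12,13) n_def[symmetric]] assms(11)] assms(14,15) N
    by (auto simp: det_to_fls_mat fls_subdegree_fls_to_fps)
  define Di where "Di = mat_inv D10"
  define S where "S = A11 - B11 * Di * C10"
  define Si where "Si = mat_inv S"
  have Di: "Di \<in> carrier_mat n n" and Si: "Si \<in> carrier_mat r r"
    unfolding Si_def S_def Di_def using blocks by (auto intro!: mat_inv_carrier simp: minus_carrier_mat)
  have "det (coeff_mat G 0) = det S * det D10"
    unfolding G0 S_def Di_def using blocks by (intro det_four_block_mat_schur assms(16))
  with detG have detS: "det S \<noteq> 0" by (simp add: det_coeff_mat_0)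
  have invG0: "mat_inv (coeff_mat G 0)
      = four_block_mat Si (- (Si * B11 * Di)) (- (Di * C10 * Si)) (Di + Di * C10 * Si * B11 * Di)"
    unfolding G0 Si_def S_def Di_def
    using blocks assms(16) detS[unfolded S_def Di_def] by (intro mat_inv_four_block_mat_schur)
  define P where "P = \<beta>0 + \<beta>1 + map_mat fps_const \<alpha>"
  have P: "P \<in> carrier_mat N N" unfolding P_def using assms(5-7) by simp
  define \<beta>2 where "\<beta>2 = of_nat m \<cdot>\<^sub>m mat_inv (to_fls_mat \<beta>1) - to_fls_mat \<beta>0 - to_fls_mat \<beta>1
             - const_fls_mat \<alpha>"
  have \<beta>2_eq: "\<beta>2 = fls_const (of_nat m) \<cdot>\<^sub>m mat_inv (to_fls_mat (diag_X_rows r N * G)) - to_fls_mat P"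
    unfolding \<beta>2_def \<beta>1_factor[symmetric] P_def using assms(5-7)
    by (intro eq_matI) (auto simp: to_fls_mat_def const_fls_mat_def fls_of_nat)
  define M where "M = four_block_mat
            (of_nat m \<cdot>\<^sub>m Si)
            (- (of_nat m \<cdot>\<^sub>m (Si * B11 * Di)) - B00 - \<alpha>12)
            (- (of_nat m \<cdot>\<^sub>m (Di * C10 * Si)))
            (of_nat m \<cdot>\<^sub>m Di + of_nat m \<cdot>\<^sub>m (Di * C10 * Si * B11 * Di) - D00 - D10 - \<alpha>22)"
  have P0: "coeff_mat P 0 = four_block_mat A00 B00 C00 D00 + four_block_mat A10 B10 C10 D10 + \<alpha>"
    unfolding P_def blocks_00(5)[symmetric] blocks_10(5)[symmetric] using assms(5-7)
    by (intro eq_matI) (auto simp: coeff_mat_def)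
  have M_eq: "of_nat m \<cdot>\<^sub>m mat_inv (coeff_mat G 0) - coeff_mat P 0 * mat_diag N (\<lambda>i. if i < r then 0 else 1)
      = M"
  proof (rule eq_matI)
    fix i j assume "i < dim_row M" "j < dim_col M"
    then have ij: "i < r + n" "j < r + n" using Si blocks unfolding M_def by auto
    show "(of_nat m \<cdot>\<^sub>m mat_inv (coeff_mat G 0) - coeff_mat P 0 * mat_diag N (\<lambda>i. if i < r then 0 else 1))
        $$ (i, j) = M $$ (i, j)"
      unfolding invG0 M_def mat_diag_mult_right[OF coeff_mat_carrier[OF P]]
      using ij blocks_\<alpha>(5) blocks assms(12,13)[unfolded n_def[symmetric]] Di Si N
      by (cases "i < r"; cases "j < r") (simp_all add: P0 distrib_left)
  qed (use Si Di blocks N coeff_mat_carrier[OF P] in \<open>auto simp: M_def mat_diag_def\<close>)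
  have "r \<le> N" using assms(3) by simp
  from det_resolvent_expansion[OF this G P detG, of "of_nat m"] detS show ?thesis
    unfolding Let_def Di_def[symmetric] S_def[symmetric] Si_def[symmetric] M_def[symmetric]
      \<beta>2_def[symmetric] \<beta>2_eq M_eq by simp
qed
end
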